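(* Let $C$ be a nonempty closed convex subset of a real Banach space $X$ and let $a\in X$. Then $a$ is a weak internal point of $C$ if and only if $a\in C$ and $C$ is quasi-symmetric with respect to $a$.
   Context: The origin is a weak internal point of a closed convex set $A$ if for every $x\in A$ there exists $\delta=\delta(x)>0$ with $-\delta x\in A$; a point $a$ is a weak internal point of $C$ if the origin is a weak internal point of $C-a$. A closed convex set $A$ containing $0$ is quasi-symmetric if for every $r>0$ there exists $\theta=\theta(r)\in(0,1]$ such that $x\in A$, $\|x\|\le r$ implies $-\theta x\in A$; $C$ is quasi-symmetric with respect to $a\in C$ if $C-a$ is quasi-symmetric. *)

theory Defs
  imports "HOL-Analysis.Analysis"
begin

definition origin_weak_internal :: "'a::real_normed_vector set \<Rightarrow> bool" where
  "origin_weak_internal A \<longleftrightarrow> (\<forall>x\<in>A. \<exists>\<delta>>0. - (\<delta> *\<^sub>R x) \<in> A)"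

definition weak_internal_point :: "'a::real_normed_vector \<Rightarrow> 'a set \<Rightarrow> bool" where
  "weak_internal_point a C \<longleftrightarrow> origin_weak_internal ((\<lambda>x. x - a) ` C)"

definition quasi_symmetric :: "'a::real_normed_vector set \<Rightarrow> bool" where
  "quasi_symmetric A \<longleftrightarrow> closed A \<and> convex A \<and> 0 \<in> A \<and>
     (\<forall>r>0. \<exists>\<theta>. 0 < \<theta> \<and> \<theta> \<le> 1 \<and>
        (\<forall>x\<in>A. norm x \<le> r \<longrightarrow> - (\<theta> *\<^sub>R x) \<in> A))"

definition quasi_symmetric_wrt :: "'a::real_normed_vector set \<Rightarrow> 'a \<Rightarrow> bool" where
  "quasi_symmetric_wrt C a \<longleftrightarrow> a \<in> C \<and> quasi_symmetric ((\<lambda>x. x - a) ` C)"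

end

theory Submission
  imports Defs
begin

text \<open>
  Let \<open>A = C - a\<close>. Quasi-symmetry trivially gives weak internality. Conversely, if \<open>0\<close> is a
  weak internal point of \<open>A\<close>, then \<open>A\<close> is the countable union of the relatively closed sets
  \<open>F\<^sub>n = {x \<in> A. -x/(n+1) \<in> A}\<close>, so by Baire's theorem in the complete metric space \<open>A\<close> some
  \<open>F\<^sub>n\<close> contains a relative ball around a point \<open>x\<^sub>0\<close>. Convexity spreads this local reflection
  property to every bounded part of \<open>A\<close>: pull \<open>x\<close> towards \<open>x\<^sub>0\<close> into the ball, reflect it, and
  take the convex combination with \<open>x\<^sub>0\<close> that cancels the \<open>x\<^sub>0\<close>-component.
\<close>

lemma origin_weak_internal_imp_zero_mem:
  assumes "convex A" "A \<noteq> {}" "origin_weak_internal A"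
  shows "0 \<in> A"
proof -
  obtain x where x: "x \<in> A" using assms(2) by auto
  then obtain d where d: "d > 0" "- (d *\<^sub>R x) \<in> A"
    using assms(3) unfolding origin_weak_internal_def by auto
  have "(d / (1 + d)) *\<^sub>R x + (1 / (1 + d)) *\<^sub>R (- (d *\<^sub>R x)) \<in> A"
    using convexD[OF assms(1) x d(2), of "d / (1 + d)" "1 / (1 + d)"] d(1)
    by (simp add: add_divide_distrib[symmetric])
  moreover have "(d / (1 + d)) *\<^sub>R x + (1 / (1 + d)) *\<^sub>R (- (d *\<^sub>R x)) = 0"
    by (simp add: scaleR_add_left[symmetric])
  ultimately show ?thesis by simp
qed

lemma convex_neg_scaleR_shrink:
  fixes A :: "'a::real_vector set"
  assumes "convex A" "0 \<in> A" "- (d *\<^sub>R x) \<in> A" "0 \<le> c" "c \<le> d"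
  shows "- (c *\<^sub>R x) \<in> A"
proof (cases "c = 0")
  case True
  then show ?thesis using assms(2) by simp
next
  case False
  with assms(4,5) have "d > 0" by simp
  define u where "u = c / d"
  have u: "0 \<le> u" "u \<le> 1" using assms(4,5) \<open>d > 0\<close> by (auto simp: u_def)
  have "- (c *\<^sub>R x) = u *\<^sub>R (- (d *\<^sub>R x)) + (1 - u) *\<^sub>R 0"
    using \<open>d > 0\<close> by (simp add: u_def)
  also have "\<dots> \<in> A"
    by (rule convexD[OF assms(1,3,2)]) (use u in auto)
  finally show ?thesis .
qed

lemma Baire_closed_countable_cover:
  fixes A :: "'a::complete_space set"
  assumes "closed A" "A \<noteq> {}"
    and closed_F: "\<And>n::nat. closedin (top_of_set A) (F n)"
    and cover: "A \<subseteq> (\<Union>n. F n)"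
  obtains n x e where "x \<in> A" "e > 0" "ball x e \<inter> A \<subseteq> F n"
proof -
  have "completely_metrizable_space (top_of_set A)"
    using assms(1) closed_closedin completely_metrizable_space_closedin
      completely_metrizable_space_euclidean by blast
  moreover have "(\<Union>n. F n) = A"
    using cover closed_F closedin_subset by fastforce
  ultimately have "\<exists>n. top_of_set A interior_of F n \<noteq> {}"
    using Baire_category_alt[of "top_of_set A" "range F"] closed_F assms(2)
      interior_of_topspace[of "top_of_set A"] by auto
  then obtain n x where "x \<in> top_of_set A interior_of F n" by blast
  moreover have "openin (top_of_set A) (top_of_set A interior_of F n)"
    by (rule openin_interior_of)
  ultimately obtain e where "e > 0" "ball x e \<inter> A \<subseteq> top_of_set A interior_of F n" "x \<in> A"
    unfolding openin_contains_ball by blast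
  with interior_of_subset[of "top_of_set A" "F n"] show ?thesis
    using that by blast
qed

lemma bounded_reflection_from_local_reflection:
  fixes A :: "'a::real_normed_vector set"
  assumes cvx: "convex A" and x0: "x0 \<in> A" and e: "e > 0" and c: "0 < c" "c \<le> 1"
    and local_reflection: "\<And>y. y \<in> A \<Longrightarrow> dist y x0 < e \<Longrightarrow> - (c *\<^sub>R y) \<in> A"
    and r: "0 \<le> r"
  obtains \<theta> where "0 < \<theta>" "\<theta> \<le> 1" "\<And>x. x \<in> A \<Longrightarrow> norm x \<le> r \<Longrightarrow> - (\<theta> *\<^sub>R x) \<in> A"
proof -
  define t where "t = e / (e + r + norm x0)"
  have t: "0 < t" "t \<le> 1" and t_small: "t * (r + norm x0) < e"
    using e r by (auto simp: t_def field_simps add_pos_nonneg)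
  define l where "l = 1 / (1 + c * (1 - t))"
  have ct: "0 \<le> c * (1 - t)" using c t by simp
  have l: "0 < l" "l \<le> 1" using ct by (auto simp: l_def)
  define \<theta> where "\<theta> = l * c * t"
  have "0 < \<theta>" using l c t by (simp add: \<theta>_def)
  moreover have "\<theta> \<le> 1"
    using mult_mono[OF l(2) mult_mono[OF c(2) t(2)]] l c t by (simp add: \<theta>_def mult.assoc)
  moreover have "- (\<theta> *\<^sub>R x) \<in> A" if xA: "x \<in> A" and nx: "norm x \<le> r" for x
  proof -
    define y where "y = (1 - t) *\<^sub>R x0 + t *\<^sub>R x"
    have yA: "y \<in> A" unfolding y_def using convexD[OF cvx x0 xA, of "1 - t" t] t by simp
    have "dist y x0 = t * norm (x - x0)"
      using t by (simp add: y_def dist_norm algebra_simps flip: scaleR_diff_right)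
    also have "\<dots> \<le> t * (r + norm x0)"
      using t nx norm_triangle_ineq4[of x x0] by (intro mult_left_mono) auto
    finally have reflected: "- (c *\<^sub>R y) \<in> A" using local_reflection yA t_small by simp
    have x0_cancels: "1 - l - l * c * (1 - t) = 0"
      using ct by (simp add: l_def field_simps)
    have "- (\<theta> *\<^sub>R x) = (1 - l - l * c * (1 - t)) *\<^sub>R x0 - \<theta> *\<^sub>R x"
      using x0_cancels by simp
    also have "\<dots> = l *\<^sub>R (- (c *\<^sub>R y)) + (1 - l) *\<^sub>R x0"
      by (simp add: y_def \<theta>_def algebra_simps)
    also have "\<dots> \<in> A"
      by (rule convexD[OF cvx reflected x0]) (use l in auto)
    finally show ?thesis .
  qed
  ultimately show ?thesis using that by blast
qed

lemma origin_weak_internal_imp_quasi_symmetric: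
  fixes A :: "'a::banach set"
  assumes cl: "closed A" and cvx: "convex A" and ne: "A \<noteq> {}"
    and owi: "origin_weak_internal A"
  shows "quasi_symmetric A"
proof -
  have zero: "0 \<in> A" using origin_weak_internal_imp_zero_mem[OF cvx ne owi] .
  define F where "F n = A \<inter> (\<lambda>x. - ((1 / real (Suc n)) *\<^sub>R x)) -` A" for n
  have closed_F: "closedin (top_of_set A) (F n)" for n
    unfolding F_def
    by (rule closedin_closed_Int, rule closed_vimage[OF cl], intro continuous_intros)
  have cover: "A \<subseteq> (\<Union>n. F n)"
  proof
    fix x assume xA: "x \<in> A"
    then obtain d where d: "d > 0" "- (d *\<^sub>R x) \<in> A"
      using owi unfolding origin_weak_internal_def by auto
    obtain n where "inverse (real (Suc n)) < d" using reals_Archimedean[OF d(1)] by auto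
    then have "- ((1 / real (Suc n)) *\<^sub>R x) \<in> A"
      by (intro convex_neg_scaleR_shrink[OF cvx zero d(2)]) (simp_all add: inverse_eq_divide)
    then show "x \<in> (\<Union>n. F n)" using xA by (auto simp: F_def)
  qed
  obtain n x0 e where x0: "x0 \<in> A" and e: "e > 0" and ball: "ball x0 e \<inter> A \<subseteq> F n"
    by (rule Baire_closed_countable_cover[OF cl ne closed_F cover])
  have local_reflection: "- ((1 / real (Suc n)) *\<^sub>R y) \<in> A" if "y \<in> A" "dist y x0 < e" for y
  proof -
    have "y \<in> ball x0 e \<inter> A" using that by (simp add: dist_commute)
    then show ?thesis using ball by (auto simp: F_def)
  qed
  show ?thesis
    unfolding quasi_symmetric_def
  proof (intro conjI cl cvx zero allI impI)
    fix r :: real assume "r > 0"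
    obtain \<theta> where "0 < \<theta>" "\<theta> \<le> 1" "\<And>x. x \<in> A \<Longrightarrow> norm x \<le> r \<Longrightarrow> - (\<theta> *\<^sub>R x) \<in> A"
      by (rule bounded_reflection_from_local_reflection[OF cvx x0 e _ _ local_reflection, where r = r])
        (use \<open>r > 0\<close> in auto)
    then show "\<exists>\<theta>>0. \<theta> \<le> 1 \<and> (\<forall>x\<in>A. norm x \<le> r \<longrightarrow> - (\<theta> *\<^sub>R x) \<in> A)" by blast
  qed
qed

lemma quasi_symmetric_imp_origin_weak_internal:
  assumes "quasi_symmetric A"
  shows "origin_weak_internal A"
  unfolding origin_weak_internal_def
proof
  fix x assume "x \<in> A"
  obtain \<theta> where "0 < \<theta>" "\<forall>y\<in>A. norm y \<le> norm x + 1 \<longrightarrow> - (\<theta> *\<^sub>R y) \<in> A"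
    using assms unfolding quasi_symmetric_def
    by (metis add_nonneg_pos norm_ge_zero zero_less_one)
  then show "\<exists>\<delta>>0. - (\<delta> *\<^sub>R x) \<in> A" using \<open>x \<in> A\<close> by auto
qed

lemma origin_weak_internal_iff_quasi_symmetric:
  fixes A :: "'a::banach set"
  assumes "closed A" "convex A" "A \<noteq> {}"
  shows "origin_weak_internal A \<longleftrightarrow> quasi_symmetric A"
  using assms origin_weak_internal_imp_quasi_symmetric quasi_symmetric_imp_origin_weak_internal
  by blast

theorem mainTheorem5:
  fixes C :: "'a::banach set" and a :: 'a
  assumes "C \<noteq> {}" and "closed C" and "convex C"
  shows "weak_internal_point a C \<longleftrightarrow> a \<in> C \<and> quasi_symmetric_wrt C a"
proof -
  let ?A = "(\<lambda>x. x - a) ` C"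
  have "weak_internal_point a C \<longleftrightarrow> quasi_symmetric ?A"
    unfolding weak_internal_point_def
    using assms by (intro origin_weak_internal_iff_quasi_symmetric)
      (auto intro: closed_translation_subtract convex_translation_subtract)
  moreover have "quasi_symmetric ?A \<Longrightarrow> a \<in> C"
    unfolding quasi_symmetric_def by auto
  ultimately show ?thesis
    unfolding quasi_symmetric_wrt_def by blast
qed

end
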